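(* Let $s,d,k,q$ be positive integers with $q\ge s$ and $d\mid(q-s)$. Define $t_i=q$ if $d\mid i$ and $t_i=s$ if $d\nmid i$, for $1\le i\le k$. Then $$C_k(t_1,\dots,t_k)\le\left(s+k+\frac{q-s}{d}-1\right)_k.$$
   Context: For nonnegative integers $c_1,\dots,c_k$ with $\sum_i ic_i=k$, let $N(c_1,\dots,c_k)=\frac{k!}{1^{c_1}c_1!\,2^{c_2}c_2!\cdots k^{c_k}c_k!}$ be the number of permutations in the symmetric group $S_k$ having exactly $c_i$ cycles of length $i$ for each $i$. Define $C_k(t_1,\dots,t_k)=\sum_{\sum ic_i=k}N(c_1,\dots,c_k)t_1^{c_1}\cdots t_k^{c_k}$. For real $t$, $(t)_k=t(t-1)\cdots(t-k+1)$. *)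

theory Defs
  imports "HOL-Analysis.Analysis"
begin

text \<open>Cycle-type vectors for permutations of S_k: c i is the number of cycles of length i
 (1 \<le> i \<le> k), c i = 0 otherwise, and sum of i * c i equals k.\<close>
definition cycle_types :: "nat \<Rightarrow> (nat \<Rightarrow> nat) set" where
  "cycle_types k = {c. (\<forall>i. c i \<noteq> 0 \<longrightarrow> i \<in> {1..k}) \<and> (\<Sum>i=1..k. i * c i) = k}"

definition N_count :: "nat \<Rightarrow> (nat \<Rightarrow> nat) \<Rightarrow> real" where
  "N_count k c = fact k / (\<Prod>i=1..k. real i ^ c i * fact (c i))"

definition cycle_index :: "nat \<Rightarrow> (nat \<Rightarrow> real) \<Rightarrow> real" where
  "cycle_index k t = (\<Sum>c\<in>cycle_types k. N_count k c * (\<Prod>i=1..k. t i ^ c i))"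

definition falling :: "real \<Rightarrow> nat \<Rightarrow> real" where
  "falling x k = (\<Prod>j<k. x - real j)"

end

theory Submission
  imports Defs "HOL-Computational_Algebra.Formal_Power_Series"
begin

text \<open>
  By the exponential formula, C_k(t)/k! is the coefficient of x^k in the product
  of the series exp(t_i x^i / i) over 1 \<le> i \<le> k. Writing q = s + d m, the weights are
  t_i = s + [d dvd i] d m, so the product factors as E_s(x) E_m(x^d), where E_c is the
  product for the constant weight c. Up to degree k the coefficients of E_c are the
  binomial numbers c^(n)/n! = binom(c + n - 1, n): nonnegative and, for an integer
  c \<ge> 1, nondecreasing in n. Hence replacing E_m(x^d) by E_m(x) can only increase the
  k-th coefficient, and E_s E_m = E_(s+m) has k-th coefficient
  (s + m)^(k)/k! = (s + m + k - 1)_k / k!.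
\<close>

unbundle no vec_syntax
notation fps_nth (infixl \<open>$\<close> 75)

lemma fps_compose_X_power_nth:
  fixes f :: "'a::comm_semiring_1 fps"
  assumes "d > 0"
  shows "(f oo fps_X ^ d) $ n = (if d dvd n then f $ (n div d) else 0)"
proof -
  have "(f oo fps_X ^ d) $ n = (\<Sum>i=0..n. if i = n div d \<and> d dvd n then f $ i else 0)"
    unfolding fps_compose_nth power_mult[symmetric]
    using assms by (intro sum.cong) auto
  also have "\<dots> = (if d dvd n then f $ (n div d) else 0)"
    by simp
  finally show ?thesis .
qed

lemma fps_compose_X_power_compose_X_power:
  fixes f :: "'a::idom fps"
  assumes "d > 0" "j > 0"
  shows "f oo fps_X ^ j oo fps_X ^ d = f oo fps_X ^ (d * j)"
proof -
  have "(fps_X oo fps_X ^ d) ^ j = (fps_X ^ j oo fps_X ^ d :: 'a fps)"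
    by (rule fps_compose_power) (use assms in simp)
  with assms show ?thesis
    by (simp add: fps_compose_assoc power_mult[symmetric] mult.commute)
qed

lemma fps_deriv_exp_compose_X_power:
  fixes a :: "'a::field_char_0"
  assumes "i > 0"
  shows "fps_deriv (fps_exp a oo fps_X ^ i)
           = (fps_exp a oo fps_X ^ i) * (fps_const (a * of_nat i) * fps_X ^ (i - 1))"
  using assms
  by (simp add: fps_compose_deriv fps_deriv_power fps_const_mult_apply_left[symmetric] mult_ac
      flip: fps_const_mult fps_of_nat)

lemma fps_deriv_prod:
  assumes "finite I" "\<And>i. i \<in> I \<Longrightarrow> fps_deriv (F i) = F i * G i"
  shows "fps_deriv (\<Prod>i\<in>I. F i) = (\<Prod>i\<in>I. F i) * (\<Sum>i\<in>I. G i)"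
  using assms by (induction I rule: finite_induct) (simp_all add: algebra_simps)

lemma fps_mult_nth_mono:
  fixes f g h :: "'a::ordered_comm_semiring fps"
  assumes "\<And>j. j \<le> n \<Longrightarrow> 0 \<le> f $ j" and "\<And>j. j \<le> n \<Longrightarrow> g $ j \<le> h $ j"
  shows "(f * g) $ n \<le> (f * h) $ n"
  unfolding fps_mult_nth using assms by (intro sum_mono mult_left_mono) auto

lemma sum_if_dvd_eq_sum_multiples:
  fixes g :: "nat \<Rightarrow> 'a::comm_monoid_add"
  assumes "d > 0"
  shows "(\<Sum>j=0..K. if d dvd j then g j else 0) = (\<Sum>l=0..K div d. g (d * l))"
proof -
  have "(\<Sum>j=0..K. if d dvd j then g j else 0) = (\<Sum>j\<in>(\<lambda>l. d * l) ` {0..K div d}. g j)"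
    using assms
    by (subst sum.inter_filter[symmetric]) (auto intro!: sum.cong simp: image_iff
        less_eq_div_iff_mult_less_eq mult.commute)
  also have "\<dots> = (\<Sum>l=0..K div d. g (d * l))"
    using assms by (simp add: sum.reindex inj_on_def)
  finally show ?thesis .
qed

definition bounded_cycle_types :: "nat \<Rightarrow> nat \<Rightarrow> (nat \<Rightarrow> nat) set" where
  "bounded_cycle_types n K = {c. (\<forall>i. c i \<noteq> 0 \<longrightarrow> i \<in> {1..n}) \<and> (\<Sum>i=1..n. i * c i) = K}"

lemma cycle_types_eq_bounded: "cycle_types k = bounded_cycle_types k k"
  by (simp add: cycle_types_def bounded_cycle_types_def)

lemma bounded_cycle_types_eq_0:
  "c \<in> bounded_cycle_types n K \<Longrightarrow> i \<notin> {1..n} \<Longrightarrow> c i = 0"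
  by (auto simp: bounded_cycle_types_def)

lemma bounded_cycle_types_le:
  assumes "c \<in> bounded_cycle_types n K"
  shows "c i \<le> K"
proof (cases "i \<in> {1..n}")
  case True
  then have "c i \<le> (\<Sum>j=1..n. j * c j)"
    by (intro order.trans[OF _ member_le_sum[of i]]) auto
  with assms show ?thesis by (simp add: bounded_cycle_types_def)
qed (simp add: bounded_cycle_types_eq_0[OF assms])

lemma finite_bounded_cycle_types: "finite (bounded_cycle_types n K)"
proof (rule finite_subset)
  show "bounded_cycle_types n K
          \<subseteq> {c. \<forall>i. (i \<in> {1..n} \<longrightarrow> c i \<in> {..K}) \<and> (i \<notin> {1..n} \<longrightarrow> c i = 0)}"
    using bounded_cycle_types_le by (auto simp: bounded_cycle_types_def)
  show "finite {c. \<forall>i. (i \<in> {1..n} \<longrightarrow> c i \<in> {..K}) \<and> (i \<notin> {1..n} \<longrightarrow> c i = 0)}"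
    by (rule finite_set_of_finite_funs) auto
qed

lemma bounded_cycle_types_Suc_iff:
  "c \<in> bounded_cycle_types (Suc n) K \<longleftrightarrow>
     c (Suc n) \<le> K div Suc n \<and> c(Suc n := 0) \<in> bounded_cycle_types n (K - Suc n * c (Suc n))"
proof -
  have "(\<Sum>i=1..n. i * (c(Suc n := 0)) i) = (\<Sum>i=1..n. i * c i)"
    by (intro sum.cong) auto
  then show ?thesis
    by (auto simp: bounded_cycle_types_def less_eq_div_iff_mult_less_eq mult.commute
        le_Suc_eq split: if_splits) (metis Suc_le_mono le0)
qed

lemma sum_bounded_cycle_types_Suc:
  "(\<Sum>c\<in>bounded_cycle_types (Suc n) K. f c)
     = (\<Sum>l=0..K div Suc n. \<Sum>c\<in>bounded_cycle_types n (K - Suc n * l). f (c(Suc n := l)))"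
proof -
  have "(\<Sum>l=0..K div Suc n. \<Sum>c\<in>bounded_cycle_types n (K - Suc n * l). f (c(Suc n := l)))
          = (\<Sum>(l, c)\<in>(SIGMA l:{0..K div Suc n}. bounded_cycle_types n (K - Suc n * l)).
               f (c(Suc n := l)))"
    by (rule sum.Sigma) (auto simp: finite_bounded_cycle_types)
  also have "\<dots> = (\<Sum>c\<in>bounded_cycle_types (Suc n) K. f c)"
    by (rule sum.reindex_bij_witness[where i = "\<lambda>c. (c (Suc n), c(Suc n := 0))"
          and j = "\<lambda>(l, c). c(Suc n := l)"])
      (auto simp: bounded_cycle_types_Suc_iff bounded_cycle_types_eq_0 fun_upd_idem)
  finally show ?thesis ..
qed

lemma prod_exp_compose_X_power_nth:
  fixes w :: "nat \<Rightarrow> 'a::field_char_0"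
  shows "(\<Prod>i=1..n. fps_exp (w i) oo fps_X ^ i) $ K
           = (\<Sum>c\<in>bounded_cycle_types n K. \<Prod>i=1..n. w i ^ c i / fact (c i))"
proof (induction n arbitrary: K)
  case 0
  have "bounded_cycle_types 0 K = (if K = 0 then {\<lambda>_. 0} else {})"
    by (auto simp: bounded_cycle_types_def fun_eq_iff)
  then show ?case by simp
next
  case (Suc n)
  have "(\<Prod>i=1..Suc n. fps_exp (w i) oo fps_X ^ i) $ K
          = ((fps_exp (w (Suc n)) oo fps_X ^ Suc n) * (\<Prod>i=1..n. fps_exp (w i) oo fps_X ^ i)) $ K"
    by (simp add: mult.commute)
  also have "\<dots> = (\<Sum>l=0..K div Suc n. w (Suc n) ^ l / fact l
                     * (\<Prod>i=1..n. fps_exp (w i) oo fps_X ^ i) $ (K - Suc n * l))"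
    unfolding fps_mult_nth fps_compose_X_power_nth[OF zero_less_Suc]
    by (simp add: sum_if_dvd_eq_sum_multiples if_distrib[of "\<lambda>x. x * _"] del: mult_Suc cong: if_cong)
  also have "\<dots> = (\<Sum>c\<in>bounded_cycle_types (Suc n) K. \<Prod>i=1..Suc n. w i ^ c i / fact (c i))"
    unfolding Suc.IH sum_bounded_cycle_types_Suc sum_distrib_left
    by (intro sum.cong refl prod.cong) (simp_all add: mult.commute)
  finally show ?case .
qed

definition cycle_index_egf :: "nat \<Rightarrow> (nat \<Rightarrow> 'a::field_char_0) \<Rightarrow> 'a fps" where
  "cycle_index_egf K t = (\<Prod>i=1..K. fps_exp (t i / of_nat i) oo fps_X ^ i)"

lemma cycle_index_eq_cycle_index_egf_nth:
  "cycle_index k t = fact k * cycle_index_egf k t $ k"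
proof -
  have "N_count k c * (\<Prod>i=1..k. t i ^ c i) = fact k * (\<Prod>i=1..k. (t i / real i) ^ c i / fact (c i))"
    for c
    by (simp add: N_count_def prod_dividef power_divide prod.distrib)
  then show ?thesis
    unfolding cycle_index_def cycle_index_egf_def prod_exp_compose_X_power_nth
    by (simp add: cycle_types_eq_bounded sum_distrib_left)
qed

lemma cycle_index_egf_nth_0: "cycle_index_egf K t $ 0 = 1"
proof -
  have "(\<Prod>i\<in>I. F i) $ 0 = 1" if "\<And>i. F i $ 0 = 1" for I and F :: "nat \<Rightarrow> 'a fps"
    using that by (induction I rule: infinite_finite_induct) auto
  then show ?thesis unfolding cycle_index_egf_def by simp
qed

lemma fps_deriv_cycle_index_egf:
  "fps_deriv (cycle_index_egf K t)
     = cycle_index_egf K t * (\<Sum>i=1..K. fps_const (t i) * fps_X ^ (i - 1))"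
  unfolding cycle_index_egf_def
  by (rule fps_deriv_prod) (simp_all add: fps_deriv_exp_compose_X_power)

lemma cycle_index_egf_recurrence:
  assumes "n < K"
  shows "of_nat (Suc n) * cycle_index_egf K t $ Suc n
           = (\<Sum>j=0..n. cycle_index_egf K t $ j * t (Suc (n - j)))"
proof -
  have weights_nth:
    "(\<Sum>i=1..K. fps_const (t i) * fps_X ^ (i - 1)) $ l = (if l < K then t (Suc l) else 0)" for l
  proof -
    have "(\<Sum>i=1..K. fps_const (t i) * fps_X ^ (i - 1)) $ l
            = (\<Sum>i=1..K. if i = Suc l then t i else 0)"
      unfolding fps_sum_nth by (intro sum.cong) auto
    then show ?thesis by simp
  qed
  have "of_nat (Suc n) * cycle_index_egf K t $ Suc n = fps_deriv (cycle_index_egf K t) $ n"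
    by simp
  also have "\<dots> = (\<Sum>j=0..n. cycle_index_egf K t $ j * t (Suc (n - j)))"
    unfolding fps_deriv_cycle_index_egf fps_mult_nth weights_nth using assms by (intro sum.cong) auto
  finally show ?thesis .
qed

lemma cycle_index_egf_mult:
  "cycle_index_egf K t * cycle_index_egf K u = cycle_index_egf K (\<lambda>i. t i + u i)"
  unfolding cycle_index_egf_def prod.distrib[symmetric]
  by (intro prod.cong refl)
    (simp add: add_divide_distrib fps_exp_add_mult fps_compose_mult_distrib)

lemma cycle_index_egf_dilate:
  assumes "d > 0" and "\<And>i. \<not> d dvd i \<Longrightarrow> u i = 0"
  shows "cycle_index_egf K u = cycle_index_egf (K div d) (\<lambda>j. u (d * j) / of_nat d) oo fps_X ^ d"
proof -
  have "cycle_index_egf K u = (\<Prod>i\<in>{i\<in>{1..K}. d dvd i}. fps_exp (u i / of_nat i) oo fps_X ^ i)"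
    unfolding cycle_index_egf_def using assms(2)
    by (intro prod.mono_neutral_right) auto
  also have "{i\<in>{1..K}. d dvd i} = (\<lambda>j. d * j) ` {1..K div d}"
    using assms(1)
    by (auto simp: image_iff less_eq_div_iff_mult_less_eq mult.commute)
  also have "(\<Prod>i\<in>(\<lambda>j. d * j) ` {1..K div d}. fps_exp (u i / of_nat i) oo fps_X ^ i)
      = (\<Prod>j=1..K div d. fps_exp (u (d * j) / of_nat d / of_nat j) oo fps_X ^ j oo fps_X ^ d)"
    using assms(1)
    by (simp add: prod.reindex inj_on_def fps_compose_X_power_compose_X_power)
  also have "\<dots> = cycle_index_egf (K div d) (\<lambda>j. u (d * j) / of_nat d) oo fps_X ^ d"
    using assms(1) by (simp add: cycle_index_egf_def fps_compose_prod_distrib)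
  finally show ?thesis .
qed

lemma sum_pochhammer_div_fact:
  fixes c :: "'a::field_char_0"
  shows "(\<Sum>j=0..n. pochhammer c j / fact j) = pochhammer (c + 1) n / fact n"
proof (induction n)
  case (Suc n)
  have "pochhammer (c + 1) n / fact n + pochhammer c (Suc n) / fact (Suc n)
          = pochhammer (c + 1) n * (c + 1 + of_nat n) / fact (Suc n)"
    by (simp add: pochhammer_rec field_simps del: of_nat_Suc) (simp add: algebra_simps)
  with Suc show ?case by (simp add: pochhammer_Suc del: fact_Suc)
qed simp

lemma cycle_index_egf_const_nth:
  fixes c :: "'a::field_char_0"
  assumes "n \<le> K"
  shows "cycle_index_egf K (\<lambda>_. c) $ n = pochhammer c n / fact n"
  using assms
proof (induction n rule: less_induct)
  case (less n)
  show ?case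
  proof (cases n)
    case (Suc m)
    have "of_nat (Suc m) * cycle_index_egf K (\<lambda>_. c) $ Suc m
            = c * (\<Sum>j=0..m. pochhammer c j / fact j)"
      using less Suc
      by (simp add: cycle_index_egf_recurrence sum_distrib_left mult.commute del: of_nat_Suc)
    also have "\<dots> = of_nat (Suc m) * (pochhammer c (Suc m) / fact (Suc m))"
      by (simp add: sum_pochhammer_div_fact pochhammer_rec field_simps del: of_nat_Suc)
    finally show ?thesis
      using Suc by (simp add: field_simps del: of_nat_Suc fact_Suc)
  qed (simp add: cycle_index_egf_nth_0)
qed

lemma pochhammer_div_fact_nonneg: "0 \<le> c \<Longrightarrow> 0 \<le> pochhammer (c::real) n / fact n"
  by (cases "c = 0") (simp_all add: pochhammer_0_left pochhammer_nonneg)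

lemma pochhammer_div_fact_mono:
  fixes c :: real
  assumes "1 \<le> c" "a \<le> b"
  shows "pochhammer c a / fact a \<le> pochhammer c b / fact b"
proof (rule lift_Suc_mono_le[OF _ assms(2)])
  fix n
  have "pochhammer c n / fact n * 1 \<le> pochhammer c n / fact n * ((c + of_nat n) / of_nat (Suc n))"
    using assms(1) by (intro mult_left_mono pochhammer_div_fact_nonneg) auto
  then show "pochhammer c n / fact n \<le> pochhammer c (Suc n) / fact (Suc n)"
    by (simp add: pochhammer_Suc field_simps del: of_nat_Suc)
qed

lemma cycle_index_egf_const_compose_X_power_nth_le:
  fixes c :: nat
  assumes "d > 0" "l \<le> K"
  shows "(cycle_index_egf (K div d) (\<lambda>_. real c) oo fps_X ^ d) $ l
           \<le> cycle_index_egf K (\<lambda>_. real c) $ l"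
proof (cases "d dvd l")
  case True
  have "pochhammer (real c) (l div d) / fact (l div d) \<le> pochhammer (real c) l / fact l"
  proof (cases "c = 0")
    case True
    with \<open>d dvd l\<close> assms(1) show ?thesis by (auto simp: pochhammer_0_left)
  next
    case False
    then show ?thesis by (intro pochhammer_div_fact_mono) auto
  qed
  with True assms show ?thesis
    by (simp add: fps_compose_X_power_nth cycle_index_egf_const_nth div_le_mono)
next
  case False
  with assms show ?thesis
    by (simp add: fps_compose_X_power_nth cycle_index_egf_const_nth pochhammer_div_fact_nonneg)
qed

lemma falling_eq_pochhammer: "falling (c + real n - 1) n = pochhammer c n"
proof (induction n)
  case (Suc n)
  have "falling (c + real (Suc n) - 1) (Suc n) = (c + real n) * falling (c + real n - 1) n"
    unfolding falling_def prod.lessThan_Suc_shift by (simp add: algebra_simps)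
  with Suc show ?case by (simp add: pochhammer_rec')
qed (simp add: falling_def)

theorem mainTheorem5:
  fixes s d k q :: nat
  assumes "s > 0" "d > 0" "k > 0" "q > 0" "q \<ge> s" "d dvd (q - s)"
  shows "cycle_index k (\<lambda>i. if d dvd i then real q else real s)
           \<le> falling (real s + real k + (real q - real s) / real d - 1) k"
proof -
  obtain m where m: "q = s + d * m"
    using assms(5,6) by (metis dvdE le_add_diff_inverse)
  define A where "A = cycle_index_egf k (\<lambda>_. real s)"
  define u where "u i = (if d dvd i then real d * real m else 0)" for i
  have "cycle_index_egf k (\<lambda>i. if d dvd i then real q else real s) = A * cycle_index_egf k u"
    by (simp add: A_def u_def m cycle_index_egf_mult if_distrib[of "\<lambda>x. real s + x"] cong: if_cong)
  also have "cycle_index_egf k u = cycle_index_egf (k div d) (\<lambda>_. real m) oo fps_X ^ d"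
    using assms(2) by (subst cycle_index_egf_dilate[of d]) (simp_all add: u_def)
  finally have "cycle_index k (\<lambda>i. if d dvd i then real q else real s)
      = fact k * (A * (cycle_index_egf (k div d) (\<lambda>_. real m) oo fps_X ^ d)) $ k"
    by (simp add: cycle_index_eq_cycle_index_egf_nth)
  also have "\<dots> \<le> fact k * (A * cycle_index_egf k (\<lambda>_. real m)) $ k"
    using assms(2)
    by (intro mult_left_mono fps_mult_nth_mono cycle_index_egf_const_compose_X_power_nth_le)
      (simp_all add: A_def cycle_index_egf_const_nth pochhammer_div_fact_nonneg)
  also have "\<dots> = pochhammer (real s + real m) k"
    by (simp add: A_def cycle_index_egf_mult cycle_index_egf_const_nth)
  also have "\<dots> = falling (real s + real k + (real q - real s) / real d - 1) k"
    using assms(2) by (simp add: m falling_eq_pochhammer[symmetric] algebra_simps)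
  finally show ?thesis .
qed

end
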